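(* Let $n,r\ge1$, $\lambda\in\Lambda_\vartriangle(n,r)$ and $d\in\mathscr D^\vartriangle_\lambda$, and let $\mathbf i=\mathbf i_\lambda d$. If $d^+$ denotes the element of maximal length in the coset $\mathfrak S_\lambda d$, then $|\mathrm{Inv}(\mathbf i)|=\ell(d^+)$, where $\mathrm{Inv}(\mathbf i)=\{(s,t)\in\mathbb Z^2\mid 1\le s\le r,\ s<t,\ i_s\ge i_t\}$.
   Context: The affine symmetric group $\mathfrak S_{\vartriangle,r}$ is the group (under composition) of bijections $w:\mathbb Z\to\mathbb Z$ with $w(i+r)=w(i)+r$. It contains $s_i$ ($1\le i\le r$): $s_i(j)=j$ if $j\not\equiv i,i+1\pmod r$, $s_i(j)=j-1$ if $j\equiv i+1$, $s_i(j)=j+1$ if $j\equiv i$; and $\rho:j\mapsto j+1$. The $s_i$ generate a Coxeter group $W$ with length function $\ell$, every element is uniquely $\rho^aw'$ ($w'\in W$), and one sets $\ell(\rho^aw')=\ell(w')$. $\Lambda_\vartriangle(n,r)$ is the set of $\lambda=(\lambda_i)_{i\in\mathbb Z}$ with $\lambda_i\in\mathbb N$, $\lambda_{i+n}=\lambda_i$, $\lambda_1+\dots+\lambda_n=r$. For $1\le i\le n$, $k\in\mathbb Z$ put $\lambda_{k,i-1}=kr+\sum_{t=1}^{i-1}\lambda_t$ and $R^\lambda_{i+kn}=\{\lambda_{k,i-1}+1,\dots,\lambda_{k,i-1}+\lambda_i\}$. $\mathfrak S_\lambda$ is the standard Young subgroup $\mathfrak S_{(\lambda_1,\dots,\lambda_n)}$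 of $\mathfrak S_r$, viewed in $\mathfrak S_{\vartriangle,r}$ by periodic extension, and $\mathscr D^\vartriangle_\lambda=\{d\mid \ell(wd)=\ell(w)+\ell(d)\ \forall w\in\mathfrak S_\lambda\}$. Let $I_\vartriangle(n,r)$ be the set of integer sequences $\mathbf i=(i_k)_{k\in\mathbb Z}$ with $i_{k+r}=i_k+n$; $\mathfrak S_{\vartriangle,r}$ acts on it on the right by $(\mathbf iw)_k=i_{w(k)}$. $\mathbf i_\lambda\in I_\vartriangle(n,r)$ is the sequence with $(\mathbf i_\lambda)_s=m$ for all $s\in R^\lambda_m$, $m\in\mathbb Z$. *)

theory Defs
  imports Main
begin

definition aff_perm :: "nat \<Rightarrow> (int \<Rightarrow> int) \<Rightarrow> bool" where
  "aff_perm r w \<longleftrightarrow> bij w \<and> (\<forall>i. w (i + int r) = w i + int r)"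

(* simple reflection s_i (1 \<le> i \<le> r); for r = 1 the defining congruence
   conditions coincide and we take s_1 = id (W is trivial) *)
definition sref :: "nat \<Rightarrow> int \<Rightarrow> int \<Rightarrow> int" where
  "sref r i j =
     (if r \<le> 1 then j
      else if j mod int r = i mod int r then j + 1
      else if j mod int r = (i + 1) mod int r then j - 1
      else j)"

definition rho_pow :: "int \<Rightarrow> int \<Rightarrow> int" where
  "rho_pow a = (\<lambda>j. j + a)"

definition word_prod :: "nat \<Rightarrow> int list \<Rightarrow> int \<Rightarrow> int" where
  "word_prod r ws = foldr (\<circ>) (map (sref r) ws) id"

(* length: l(rho^a w') = l(w'), the Coxeter length of w' in W = <s_1..s_r> *)
definition aff_len :: "nat \<Rightarrow> (int \<Rightarrow> int) \<Rightarrow> nat" where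
  "aff_len r w = (LEAST k. \<exists>a ws. length ws = k \<and> set ws \<subseteq> {1..int r}
                        \<and> w = rho_pow a \<circ> word_prod r ws)"

definition Lam :: "nat \<Rightarrow> nat \<Rightarrow> (int \<Rightarrow> nat) set" where
  "Lam n r = {lam. (\<forall>i. lam (i + int n) = lam i) \<and> (\<Sum>t=1..int n. lam t) = r}"

definition lam_off :: "nat \<Rightarrow> (int \<Rightarrow> nat) \<Rightarrow> int \<Rightarrow> int \<Rightarrow> int" where
  "lam_off r lam k i = k * int r + (\<Sum>t=1..i - 1. int (lam t))"

definition Rblock :: "nat \<Rightarrow> nat \<Rightarrow> (int \<Rightarrow> nat) \<Rightarrow> int \<Rightarrow> int set" where
  "Rblock n r lam m =
     (let k = (m - 1) div int n; i = (m - 1) mod int n + 1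
      in {lam_off r lam k i + 1 .. lam_off r lam k i + int (lam i)})"

definition i_lam :: "nat \<Rightarrow> nat \<Rightarrow> (int \<Rightarrow> nat) \<Rightarrow> int \<Rightarrow> int" where
  "i_lam n r lam s = (THE m. s \<in> Rblock n r lam m)"

definition seq_act :: "(int \<Rightarrow> int) \<Rightarrow> (int \<Rightarrow> int) \<Rightarrow> int \<Rightarrow> int" where
  "seq_act ii w = ii \<circ> w"

(* Young subgroup S_lambda of S_r, periodically extended to Z *)
definition Young :: "nat \<Rightarrow> nat \<Rightarrow> (int \<Rightarrow> nat) \<Rightarrow> (int \<Rightarrow> int) set" where
  "Young n r lam = {w. aff_perm r w \<and>
      (\<forall>i\<in>{1..int n}. \<forall>j\<in>Rblock n r lam i. w j \<in> Rblock n r lam i)}"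

definition Dmin :: "nat \<Rightarrow> nat \<Rightarrow> (int \<Rightarrow> nat) \<Rightarrow> (int \<Rightarrow> int) set" where
  "Dmin n r lam = {d. aff_perm r d \<and>
      (\<forall>w\<in>Young n r lam. aff_len r (w \<circ> d) = aff_len r w + aff_len r d)}"

definition Inv :: "nat \<Rightarrow> (int \<Rightarrow> int) \<Rightarrow> (int \<times> int) set" where
  "Inv r ii = {(s, t). 1 \<le> s \<and> s \<le> int r \<and> s < t \<and> ii s \<ge> ii t}"

end

theory Submission
  imports Defs
begin

(*
  The length of an affine permutation w equals its number of inversions, the pairs (s, t) with
  1 \<le> s \<le> r, s < t and w t < w s: left multiplication by s\<^sub>a changes this number by exactly one,
  and an element without inversions is a power of \<rho>.

  The sequence i\<^sub>\<lambda> is weakly increasing and constant exactly on the blocks R\<^sup>\<lambda>\<^sub>m, which the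
  elements of \<SS>\<^sub>\<lambda> permute. Hence Inv(i\<^sub>\<lambda> d) = Inv(i\<^sub>\<lambda> d\<^sup>+) contains the inversions of d\<^sup>+,
  the other pairs being those lying in one block in increasing order under d\<^sup>+. Such a pair
  would give a and a + 1 in one block with d\<^sup>+\<^sup>-\<^sup>1 a < d\<^sup>+\<^sup>-\<^sup>1 (a + 1), and then s\<^sub>a d\<^sup>+ would be
  a longer element of the coset.
*)

lemma int_eq_residue_plus_mult: "(t::int) = ((t - 1) mod m + 1) + ((t - 1) div m) * m"
  using div_mult_mod_eq[of "t - 1" m] by linarith

lemma residue_bounds:
  assumes "m \<ge> 1" shows "1 \<le> (t - 1) mod int m + 1" "(t - 1) mod int m + 1 \<le> int m"
proof -
  have "int m > 0" using assms by simp
  from pos_mod_sign[OF this, of "t - 1"] pos_mod_bound[OF this, of "t - 1"]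
  show "1 \<le> (t - 1) mod int m + 1" "(t - 1) mod int m + 1 \<le> int m" by linarith+
qed

lemma obtain_residue_plus_mult:
  assumes "m \<ge> 1"
  obtains t0 k where "t = t0 + k * int m" "1 \<le> t0" "t0 \<le> int m"
  using int_eq_residue_plus_mult residue_bounds[OF assms] by blast

lemma residue_unique:
  fixes m :: int
  assumes "1 \<le> p" "p \<le> m" "1 \<le> p'" "p' \<le> m" "p - p' = k * m"
  shows "k = 0"
proof (rule ccontr)
  assume "k \<noteq> 0"
  then consider "k \<ge> 1" | "k \<le> -1" by linarith
  then show False
  proof cases
    case 1 then have "k * m \<ge> 1 * m" using assms by (intro mult_right_mono) auto
    then show False using assms by linarith
  next
    case 2 then have "k * m \<le> (-1) * m" using assms by (intro mult_right_mono) auto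
    then show False using assms by linarith
  qed
qed

lemma strict_mono_int_succ:
  fixes f :: "int \<Rightarrow> 'a::order"
  assumes "\<And>x. f x < f (x + 1)"
  shows "strict_mono f"
proof
  fix x y :: int
  assume "x < y"
  then have "x + 1 \<le> y" by simp
  then show "f x < f y"
  proof (induction y rule: int_ge_induct)
    case base show ?case by (rule assms)
  next
    case (step y) then show ?case using assms[of y] by order
  qed
qed

lemma exists_ascent_between:
  fixes f :: "int \<Rightarrow> 'a::linorder"
  assumes "x \<le> y" and "f x < f y"
  shows "\<exists>a. x \<le> a \<and> a < y \<and> f a < f (a + 1)"
  using assms
proof (induction y rule: int_ge_induct)
  case base then show ?case by simp
next
  case (step y)
  show ?case
  proof (cases "f x < f y")
    case True then show ?thesis using step by force
  next
    case False then show ?thesis using step by (intro exI[of _ y]) auto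
  qed
qed

lemma exists_crossing_step:
  fixes f :: "int \<Rightarrow> 'a::linorder"
  assumes "m1 \<le> m2" and "f m1 < x" and "x \<le> f m2"
  shows "\<exists>m. f m < x \<and> x \<le> f (m + 1)"
  using assms
proof (induction m2 rule: int_ge_induct)
  case base then show ?case by simp
next
  case (step m2)
  show ?case
  proof (cases "x \<le> f m2")
    case True then show ?thesis using step by simp
  next
    case False then show ?thesis using step by (intro exI[of _ m2]) simp
  qed
qed

section \<open>Affine permutations and simple reflections\<close>

lemma aff_perm_shift_mult:
  assumes "aff_perm r w" shows "w (x + k * int r) = w x + k * int r"
proof (induction k rule: int_induct[where k=0])
  case base then show ?case by simp
next
  case (step1 i)
  have "w (x + (i + 1) * int r) = w ((x + i * int r) + int r)" by (simp add: algebra_simps)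
  also have "\<dots> = w (x + i * int r) + int r" using assms unfolding aff_perm_def by blast
  finally show ?case using step1 by (simp add: algebra_simps)
next
  case (step2 i)
  have "w (x + i * int r) = w ((x + (i - 1) * int r) + int r)" by (simp add: algebra_simps)
  also have "\<dots> = w (x + (i - 1) * int r) + int r" using assms unfolding aff_perm_def by blast
  finally show ?case using step2 by (simp add: algebra_simps)
qed

lemma aff_perm_inj: "aff_perm r u \<Longrightarrow> inj u"
  unfolding aff_perm_def bij_def by blast

lemma aff_perm_inv_apply: "aff_perm r u \<Longrightarrow> u (inv u y) = y"
  unfolding aff_perm_def by (meson bij_inv_eq_iff)

lemma aff_perm_comp: "aff_perm r f \<Longrightarrow> aff_perm r g \<Longrightarrow> aff_perm r (f \<circ> g)"
  unfolding aff_perm_def by (simp add: bij_comp)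

lemma aff_perm_step_one: "aff_perm 1 w \<Longrightarrow> w (x + 1) = w x + 1"
  unfolding aff_perm_def by simp

lemma sref_le_one: "r \<le> 1 \<Longrightarrow> sref r a = id"
  by (simp add: sref_def fun_eq_iff)

lemma sref_eq_dvd:
  assumes "r \<ge> 2"
  shows "sref r i j = (if int r dvd (j - i) then j + 1 else if int r dvd (j - i - 1) then j - 1 else j)"
  using assms unfolding sref_def by (simp add: mod_eq_dvd_iff algebra_simps)

lemma not_dvd_consecutive:
  assumes "r \<ge> 2" "int r dvd u" shows "\<not> int r dvd (u + 1)"
proof
  assume "int r dvd (u + 1)"
  then have "int r dvd 1" using assms(2) by (metis add_diff_cancel_left' dvd_diff)
  then show False using assms(1) zdvd_imp_le[of "int r" 1] by simp
qed

lemma sref_involution: "sref r i (sref r i j) = j"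
proof (cases "r \<le> 1")
  case True then show ?thesis by (simp add: sref_le_one)
next
  case False
  then have r2: "r \<ge> 2" by simp
  show ?thesis
    unfolding sref_eq_dvd[OF r2]
    using not_dvd_consecutive[OF r2, of "j - i"] not_dvd_consecutive[OF r2, of "j - i - 1"]
    by (auto simp: algebra_simps)
qed

lemma sref_comp_sref: "sref r a \<circ> (sref r a \<circ> u) = u"
  by (simp add: fun_eq_iff sref_involution)

lemma sref_self: "r \<ge> 2 \<Longrightarrow> sref r a a = a + 1"
  by (simp add: sref_eq_dvd)

lemma sref_succ: "r \<ge> 2 \<Longrightarrow> sref r a (a + 1) = a"
  using not_dvd_consecutive[of r 0] by (simp add: sref_eq_dvd)

text \<open>Away from the pair \<open>a + k r, a + 1 + k r\<close>, which it swaps, \<open>s\<^sub>a\<close> preserves the order.\<close>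
lemma sref_less_iff:
  assumes r2: "r \<ge> 2" and "x \<noteq> y"
  shows "sref r a y < sref r a x \<longleftrightarrow>
          (y < x \<and> \<not> (int r dvd (y - a) \<and> x = y + 1)) \<or> (int r dvd (x - a) \<and> y = x + 1)"
proof -
  have consecutive: "v \<noteq> u + 1" if "int r dvd u" "int r dvd v" for u v
    using that not_dvd_consecutive[OF r2] by blast
  have distinct: "u \<noteq> v" if "int r dvd u" "\<not> int r dvd v" for u v :: int
    using that by blast
  show ?thesis
    unfolding sref_eq_dvd[OF r2]
    using assms(2) consecutive[of "y - a" "x - (1 + a)"] consecutive[of "x - a" "y - (1 + a)"]
      consecutive[of "y - a" "x - a"] consecutive[of "x - a" "y - a"]
      consecutive[of "y - (1 + a)" "x - (1 + a)"] consecutive[of "x - (1 + a)" "y - (1 + a)"]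
      distinct[of "x - (1 + a)" "y - a"] distinct[of "y - (1 + a)" "x - a"]
      distinct[of "y - a" "x - (1 + a)"] distinct[of "x - a" "y - (1 + a)"]
    by (auto simp: algebra_simps)
qed

lemma sref_shift: "sref r a (j + int r) = sref r a j + int r"
proof (cases "r \<le> 1")
  case True then show ?thesis by (simp add: sref_le_one)
next
  case False
  then have r2: "r \<ge> 2" by simp
  have "int r dvd (j + int r - c) \<longleftrightarrow> int r dvd (j - c)" for c
    by (metis add_diff_eq diff_add_eq dvd_add_left_iff dvd_refl)
  then show ?thesis unfolding sref_eq_dvd[OF r2] by (simp add: algebra_simps)
qed

lemma sref_shift_index: "sref r (i + k * int r) = sref r i"
proof -
  have "(c + k * int r) mod int r = c mod int r" for c by simp
  from this[of i] this[of "i + 1"] show ?thesis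
    unfolding sref_def fun_eq_iff by (simp add: algebra_simps)
qed

lemma sref_comp_rho_pow: "sref r a \<circ> rho_pow b = rho_pow b \<circ> sref r (a - b)"
proof (cases "r \<le> 1")
  case True then show ?thesis by (simp add: sref_le_one)
next
  case False
  then have r2: "r \<ge> 2" by simp
  have shift: "j + b - a = j - (a - b)" "j + b - a - 1 = j - (a - b) - 1" for j by simp_all
  show ?thesis unfolding fun_eq_iff comp_apply rho_pow_def sref_eq_dvd[OF r2] shift by simp
qed

lemma aff_perm_sref: "aff_perm r (sref r a)"
proof -
  have "sref r a \<circ> sref r a = id" using sref_involution by (simp add: fun_eq_iff)
  then have "bij (sref r a)" using o_bij by blast
  then show ?thesis unfolding aff_perm_def using sref_shift by simp
qed

lemma word_prod_Nil: "word_prod r [] = id"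
  by (simp add: word_prod_def)

lemma word_prod_Cons: "word_prod r (i # ws) = sref r i \<circ> word_prod r ws"
  by (simp add: word_prod_def)

lemma aff_perm_word_prod: "aff_perm r (word_prod r ws)"
proof (induction ws)
  case Nil then show ?case by (auto simp: word_prod_Nil aff_perm_def bij_def)
next
  case (Cons i ws) then show ?case
    unfolding word_prod_Cons by (intro aff_perm_comp aff_perm_sref)
qed

section \<open>Length as number of inversions\<close>

definition inversions :: "nat \<Rightarrow> (int \<Rightarrow> int) \<Rightarrow> (int \<times> int) set" where
  "inversions r u = {(s, t). 1 \<le> s \<and> s \<le> int r \<and> s < t \<and> u t < u s}"

lemma finite_inversions:
  assumes r1: "r \<ge> 1" and u: "aff_perm r u"
  shows "finite (inversions r u)"
proof -
  define C where "C = (\<Sum>p\<in>{1..int r}. \<bar>u p\<bar>)"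
  have C: "\<bar>u p\<bar> \<le> C" if "p \<in> {1..int r}" for p
    unfolding C_def by (rule member_le_sum) (use that in auto)
  have "inversions r u \<subseteq> {1..int r} \<times> {1..int r + 2 * C}"
  proof (clarify, unfold inversions_def, clarify)
    fix s t assume st: "1 \<le> s" "s \<le> int r" "s < t" "u t < u s"
    obtain t0 k where t: "t = t0 + k * int r" and t0: "1 \<le> t0" "t0 \<le> int r"
      using obtain_residue_plus_mult[OF r1] .
    have "u t = u t0 + k * int r" using t aff_perm_shift_mult[OF u] by simp
    moreover have "\<bar>u s\<bar> \<le> C" "\<bar>u t0\<bar> \<le> C" using C st t0 by auto
    ultimately have "k * int r < 2 * C" using st by linarith
    then show "s \<in> {1..int r} \<and> t \<in> {1..int r + 2 * C}" using st t t0 by auto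
  qed
  then show ?thesis by (rule finite_subset) auto
qed

text \<open>If \<open>a\<close> precedes \<open>a + 1\<close> in the window of \<open>u\<close>, then \<open>s\<^sub>a u\<close> has exactly one new
  inversion, namely the pair of positions of \<open>a, a + 1\<close> translated into \<open>[1, r]\<close>.\<close>
lemma card_inversions_sref_ascent:
  assumes r2: "r \<ge> 2" and u: "aff_perm r u" and uP: "u P = a" and uQ: "u Q = a + 1" and PQ: "P < Q"
  shows "card (inversions r (sref r a \<circ> u)) = Suc (card (inversions r u))"
proof -
  have r1: "r \<ge> 1" using r2 by simp
  have inj: "inj u" using aff_perm_inj[OF u] .
  obtain p0 k0 where P: "P = p0 + k0 * int r" and p0: "1 \<le> p0" "p0 \<le> int r"
    using obtain_residue_plus_mult[OF r1] .
  define q0 where "q0 = Q - k0 * int r"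
  have up0: "u p0 = a - k0 * int r" using aff_perm_shift_mult[OF u, of P "-k0"] uP P by simp
  have uq0: "u q0 = a + 1 - k0 * int r"
    unfolding q0_def using aff_perm_shift_mult[OF u, of Q "-k0"] uQ by simp
  have preimage_a: "p = P + m * int r" if "u p = a + m * int r" for p m
    using aff_perm_shift_mult[OF u, of P m] uP that injD[OF inj, of p "P + m * int r"] by simp
  have preimage_a1: "q = Q + m * int r" if "u q = a + 1 + m * int r" for q m
    using aff_perm_shift_mult[OF u, of Q m] uQ that injD[OF inj, of q "Q + m * int r"] by simp
  have eq: "inversions r (sref r a \<circ> u) = insert (p0, q0) (inversions r u)"
  proof (rule set_eqI, clarify)
    fix p q
    show "(p, q) \<in> inversions r (sref r a \<circ> u) \<longleftrightarrow> (p, q) \<in> insert (p0, q0) (inversions r u)"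
    proof (cases "1 \<le> p \<and> p \<le> int r \<and> p < q")
      case False
      moreover have "p0 < q0" unfolding q0_def using P PQ by simp
      ultimately show ?thesis using p0 unfolding inversions_def by auto
    next
      case True
      then have ne: "u p \<noteq> u q" using inj by (metis injD less_irrefl)
      have no_swap: "\<not> (int r dvd (u q - a) \<and> u p = u q + 1)"
      proof
        assume h: "int r dvd (u q - a) \<and> u p = u q + 1"
        then obtain m where m: "u q - a = int r * m" by (auto elim: dvdE)
        then have "q = P + m * int r" using preimage_a[of q m] by (simp add: algebra_simps)
        moreover have "p = Q + m * int r" using preimage_a1[of p m] m h by (simp add: algebra_simps)
        ultimately show False using True PQ by simp
      qed
      have swap: "(int r dvd (u p - a) \<and> u q = u p + 1) \<longleftrightarrow> (p, q) = (p0, q0)"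
      proof
        assume h: "int r dvd (u p - a) \<and> u q = u p + 1"
        then obtain m where m: "u p - a = int r * m" by (auto elim: dvdE)
        then have p: "p = P + m * int r" using preimage_a[of p m] by (simp add: algebra_simps)
        have q: "q = Q + m * int r" using preimage_a1[of q m] m h by (simp add: algebra_simps)
        have "p - p0 = (m + k0) * int r" unfolding p P by (simp add: algebra_simps)
        then have "m = - k0" using residue_unique[of p "int r" p0 "m + k0"] True p0 by simp
        then show "(p, q) = (p0, q0)" using p q P unfolding q0_def by simp
      next
        assume "(p, q) = (p0, q0)"
        then show "int r dvd (u p - a) \<and> u q = u p + 1" using up0 uq0 by simp
      qed
      have "(p, q) \<in> inversions r (sref r a \<circ> u) \<longleftrightarrow> sref r a (u q) < sref r a (u p)"
        using True unfolding inversions_def by simp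
      also have "\<dots> \<longleftrightarrow> (u q < u p \<and> \<not> (int r dvd (u q - a) \<and> u p = u q + 1))
                         \<or> (int r dvd (u p - a) \<and> u q = u p + 1)"
        by (rule sref_less_iff[OF r2 ne])
      also have "\<dots> \<longleftrightarrow> u q < u p \<or> (p, q) = (p0, q0)" using no_swap swap by blast
      also have "\<dots> \<longleftrightarrow> (p, q) \<in> insert (p0, q0) (inversions r u)"
        using True unfolding inversions_def by auto
      finally show ?thesis .
    qed
  qed
  have "(p0, q0) \<notin> inversions r u" using up0 uq0 unfolding inversions_def by simp
  then show ?thesis unfolding eq using finite_inversions[OF r1 u] by simp
qed

lemma card_inversions_sref_descent:
  assumes r2: "r \<ge> 2" and u: "aff_perm r u" and uP: "u P = a" and uQ: "u Q = a + 1" and QP: "Q < P"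
  shows "card (inversions r u) = Suc (card (inversions r (sref r a \<circ> u)))"
proof -
  have u': "aff_perm r (sref r a \<circ> u)" by (intro aff_perm_comp aff_perm_sref u)
  have "(sref r a \<circ> u) Q = a" "(sref r a \<circ> u) P = a + 1"
    using uP uQ sref_self[OF r2] sref_succ[OF r2] by auto
  from card_inversions_sref_ascent[OF r2 u' this QP] show ?thesis
    unfolding sref_comp_sref .
qed

lemma card_inversions_sref_le:
  assumes r1: "r \<ge> 1" and u: "aff_perm r u"
  shows "card (inversions r (sref r a \<circ> u)) \<le> Suc (card (inversions r u))"
proof (cases "r = 1")
  case True then show ?thesis by (simp add: sref_le_one)
next
  case False
  then have r2: "r \<ge> 2" using r1 by simp
  have uP: "u (inv u a) = a" and uQ: "u (inv u (a + 1)) = a + 1"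
    using aff_perm_inv_apply[OF u] by auto
  then have "inv u a \<noteq> inv u (a + 1)" by auto
  then consider "inv u a < inv u (a + 1)" | "inv u (a + 1) < inv u a" by linarith
  then show ?thesis
  proof cases
    case 1 then show ?thesis using card_inversions_sref_ascent[OF r2 u uP uQ] by simp
  next
    case 2 then show ?thesis using card_inversions_sref_descent[OF r2 u uP uQ] by simp
  qed
qed

lemma inversions_rho_pow_comp: "inversions r (rho_pow a \<circ> u) = inversions r u"
  by (simp add: inversions_def rho_pow_def)

lemma card_inversions_le_length:
  assumes r1: "r \<ge> 1"
  shows "card (inversions r (rho_pow a \<circ> word_prod r ws)) \<le> length ws"
proof (induction ws)
  case Nil
  have "inversions r (rho_pow a \<circ> word_prod r []) = {}"
    by (auto simp: word_prod_Nil inversions_def rho_pow_def)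
  then show ?case by (simp only: card.empty)
next
  case (Cons i ws)
  have "card (inversions r (rho_pow a \<circ> word_prod r (i # ws)))
        = card (inversions r (sref r i \<circ> word_prod r ws))"
    by (simp only: inversions_rho_pow_comp word_prod_Cons)
  also have "\<dots> \<le> Suc (card (inversions r (word_prod r ws)))"
    by (rule card_inversions_sref_le[OF r1 aff_perm_word_prod])
  also have "\<dots> \<le> Suc (length ws)" using Cons.IH unfolding inversions_rho_pow_comp by simp
  finally show ?case by (simp only: length_Cons)
qed

lemma inversions_empty_imp_ascent:
  assumes r1: "r \<ge> 1" and u: "aff_perm r u" and e: "inversions r u = {}"
  shows "u x < u (x + 1)"
proof -
  obtain x0 k where x: "x = x0 + k * int r" and x0: "1 \<le> x0" "x0 \<le> int r"
    using obtain_residue_plus_mult[OF r1] .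
  have "u x0 \<noteq> u (x0 + 1)" using injD[OF aff_perm_inj[OF u], of x0 "x0 + 1"] by auto
  moreover have "(x0, x0 + 1) \<notin> inversions r u" using e by simp
  ultimately have "u x0 < u (x0 + 1)" using x0 unfolding inversions_def by auto
  moreover have "u (x + 1) = u (x0 + 1) + k * int r" "u x = u x0 + k * int r"
    using aff_perm_shift_mult[OF u, of "x0 + 1" k] aff_perm_shift_mult[OF u, of x0 k] x
    by (simp_all add: algebra_simps)
  ultimately show ?thesis by simp
qed

lemma aff_perm_strict_mono_eq_rho_pow:
  assumes u: "aff_perm r u" and mono: "strict_mono u"
  shows "u = rho_pow (u 0)"
proof -
  have step: "u (x + 1) = u x + 1" for x
  proof (rule ccontr)
    assume "u (x + 1) \<noteq> u x + 1"
    then have gt: "u x + 1 < u (x + 1)" using mono[THEN strict_monoD, of x "x + 1"] by simp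
    define z where "z = inv u (u x + 1)"
    have uz: "u z = u x + 1" unfolding z_def using aff_perm_inv_apply[OF u] by simp
    consider "z \<le> x" | "x + 1 \<le> z" by linarith
    then show False
    proof cases
      case 1 then show False using uz strict_mono_less_eq[OF mono, of z x] by simp
    next
      case 2 then show False using uz gt strict_mono_less_eq[OF mono, of "x + 1" z] by simp
    qed
  qed
  have "u x = x + u 0" for x
  proof (induction x rule: int_induct[where k=0])
    case base then show ?case by simp
  next
    case (step1 i) then show ?case using step[of i] by simp
  next
    case (step2 i) then show ?case using step[of "i - 1"] by simp
  qed
  then show ?thesis unfolding fun_eq_iff rho_pow_def by blast
qed

text \<open>Induction on the number of inversions: a descent \<open>u\<^sup>-\<^sup>1 (a + 1) < u\<^sup>-\<^sup>1 a\<close> lets us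
  peel off \<open>s\<^sub>a\<close>, and an element without inversions is a power of \<open>\<rho>\<close>.\<close>
lemma word_of_card_inversions:
  assumes r1: "r \<ge> 1"
  shows "aff_perm r w \<Longrightarrow> \<exists>a ws. length ws = card (inversions r w) \<and> set ws \<subseteq> {1..int r}
                                \<and> w = rho_pow a \<circ> word_prod r ws"
proof (induction "card (inversions r w)" arbitrary: w)
  case 0
  then have "inversions r w = {}" using finite_inversions[OF r1] by auto
  then have "w = rho_pow (w 0)"
    using aff_perm_strict_mono_eq_rho_pow[OF 0(2)] inversions_empty_imp_ascent[OF r1 0(2)]
      strict_mono_int_succ by blast
  then show ?case using 0(1) by (intro exI[of _ "w 0"] exI[of _ "[]"]) (simp add: word_prod_Nil)
next
  case (Suc N)
  have w: "aff_perm r w" by fact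
  have ne: "inversions r w \<noteq> {}" using Suc.hyps(2) by auto
  obtain a where desc: "inv w (a + 1) < inv w a"
  proof (rule ccontr)
    assume "\<not> thesis"
    moreover have "inv w (a + 1) \<noteq> inv w a" for a
      using aff_perm_inv_apply[OF w] by (metis add_cancel_right_right one_neq_zero)
    ultimately have "inv w a < inv w (a + 1)" for a using that by (meson linorder_neqE)
    then have "strict_mono (inv w)" by (rule strict_mono_int_succ)
    moreover obtain s t where "s < t" "w t < w s" using ne unfolding inversions_def by auto
    ultimately have "inv w (w t) < inv w (w s)" by (simp add: strict_monoD)
    then show False using \<open>s < t\<close> inv_f_f[OF aff_perm_inj[OF w]] by simp
  qed
  have r2: "r \<ge> 2"
  proof (rule ccontr)
    assume "\<not> r \<ge> 2"
    then have "r = 1" using r1 by simp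
    then have "strict_mono w"
      using aff_perm_step_one[of w] w by (intro strict_mono_int_succ) simp
    then show False using ne unfolding inversions_def strict_mono_def by fastforce
  qed
  define u where "u = sref r a \<circ> w"
  have u: "aff_perm r u" unfolding u_def by (intro aff_perm_comp aff_perm_sref w)
  have N: "N = card (inversions r u)"
    using card_inversions_sref_descent[OF r2 w _ _ desc] aff_perm_inv_apply[OF w] Suc.hyps(2)
    unfolding u_def by simp
  obtain b ws where
    ws: "length ws = N" "set ws \<subseteq> {1..int r}" "u = rho_pow b \<circ> word_prod r ws"
    using Suc.hyps(1)[OF N u] unfolding N[symmetric] by blast
  obtain i k where ab: "a - b = i + k * int r" and i: "1 \<le> i" "i \<le> int r"
    using obtain_residue_plus_mult[OF r1] .
  have "w = sref r a \<circ> u" unfolding u_def sref_comp_sref ..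
  also have "\<dots> = rho_pow b \<circ> (sref r (a - b) \<circ> word_prod r ws)"
    unfolding ws(3) o_assoc sref_comp_rho_pow by (simp only: comp_assoc)
  also have "\<dots> = rho_pow b \<circ> word_prod r (i # ws)"
    unfolding word_prod_Cons ab sref_shift_index ..
  finally have "w = rho_pow b \<circ> word_prod r (i # ws)" .
  moreover have "length (i # ws) = card (inversions r w)" using ws(1) Suc.hyps(2) by simp
  moreover have "set (i # ws) \<subseteq> {1..int r}" using ws(2) i by simp
  ultimately show ?case by blast
qed

theorem aff_len_eq_card_inversions:
  assumes r1: "r \<ge> 1" and w: "aff_perm r w"
  shows "aff_len r w = card (inversions r w)"
  unfolding aff_len_def
proof (rule Least_equality)
  show "\<exists>a ws. length ws = card (inversions r w) \<and> set ws \<subseteq> {1..int r}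
              \<and> w = rho_pow a \<circ> word_prod r ws"
    by (rule word_of_card_inversions[OF r1 w])
next
  fix k assume "\<exists>a ws. length ws = k \<and> set ws \<subseteq> {1..int r} \<and> w = rho_pow a \<circ> word_prod r ws"
  then show "card (inversions r w) \<le> k" using card_inversions_le_length[OF r1] by blast
qed

section \<open>The blocks \<open>R\<^sup>\<lambda>\<^sub>m\<close> and the sequence \<open>i\<^sub>\<lambda>\<close>\<close>

text \<open>\<open>block_start n r lam m\<close> is \<open>\<lambda>\<^sub>k\<^sub>,\<^sub>i\<^sub>-\<^sub>1\<close> for \<open>m = i + k n\<close>, \<open>1 \<le> i \<le> n\<close>, so that
  \<open>R\<^sup>\<lambda>\<^sub>m\<close> consists of the \<open>\<lambda>\<^sub>m\<close> integers following it.\<close>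
definition block_start :: "nat \<Rightarrow> nat \<Rightarrow> (int \<Rightarrow> nat) \<Rightarrow> int \<Rightarrow> int" where
  "block_start n r lam m = lam_off r lam ((m - 1) div int n) ((m - 1) mod int n + 1)"

context
  fixes n r :: nat and lam :: "int \<Rightarrow> nat"
  assumes n1: "n \<ge> 1" and r1: "r \<ge> 1" and lam: "lam \<in> Lam n r"
begin

lemma lam_shift_mult: "lam (x + k * int n) = lam x"
proof (induction k rule: int_induct[where k=0])
  case base then show ?case by simp
next
  case (step1 i)
  have "lam (x + (i + 1) * int n) = lam ((x + i * int n) + int n)" by (simp add: algebra_simps)
  then show ?case using step1 lam unfolding Lam_def by simp
next
  case (step2 i)
  have "lam (x + i * int n) = lam ((x + (i - 1) * int n) + int n)" by (simp add: algebra_simps)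
  then show ?case using step2 lam unfolding Lam_def by simp
qed

lemma lam_residue: "lam ((m - 1) mod int n + 1) = lam m"
  using lam_shift_mult[of "(m - 1) mod int n + 1" "(m - 1) div int n"]
    int_eq_residue_plus_mult[of m "int n"] by simp

lemma block_start_succ: "block_start n r lam (m + 1) = block_start n r lam m + int (lam m)"
proof -
  define k where "k = (m - 1) div int n"
  define i where "i = (m - 1) mod int n + 1"
  have m: "m = i + k * int n" unfolding i_def k_def by (rule int_eq_residue_plus_mult)
  have i: "1 \<le> i" "i \<le> int n" unfolding i_def using residue_bounds[OF n1] by simp_all
  have start_m: "block_start n r lam m = k * int r + (\<Sum>t=1..i - 1. int (lam t))"
    unfolding block_start_def lam_off_def k_def i_def by simp
  have sum_i: "(\<Sum>t=1..i. int (lam t)) = (\<Sum>t=1..i - 1. int (lam t)) + int (lam i)"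
  proof -
    have "{1..i} = insert i {1..i - 1}" using i by auto
    then show ?thesis by (simp add: add.commute)
  qed
  have "lam m = lam i" unfolding m by (rule lam_shift_mult)
  moreover have "block_start n r lam (m + 1) = block_start n r lam m + int (lam i)"
  proof (cases "i < int n")
    case True
    then have "(m + 1 - 1) div int n = k" "(m + 1 - 1) mod int n = i"
      unfolding m using i by (simp_all add: add.commute)
    then have "block_start n r lam (m + 1) = k * int r + (\<Sum>t=1..i. int (lam t))"
      unfolding block_start_def lam_off_def by simp
    then show ?thesis using start_m sum_i by simp
  next
    case False
    then have "i = int n" using i by simp
    then have "(m + 1 - 1) div int n = k + 1" "(m + 1 - 1) mod int n = 0"
      unfolding m using n1 by (simp_all add: algebra_simps)
    then have "block_start n r lam (m + 1) = (k + 1) * int r"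
      unfolding block_start_def lam_off_def by simp
    moreover have "(\<Sum>t=1..i. int (lam t)) = int r"
      using \<open>i = int n\<close> lam unfolding Lam_def by (simp flip: of_nat_sum)
    ultimately show ?thesis using start_m sum_i by (simp add: algebra_simps)
  qed
  ultimately show ?thesis by simp
qed

lemma Rblock_eq_block_start:
  "Rblock n r lam m = {block_start n r lam m + 1 .. block_start n r lam (m + 1)}"
proof -
  have "Rblock n r lam m = {block_start n r lam m + 1 .. block_start n r lam m + int (lam m)}"
    unfolding Rblock_def block_start_def Let_def lam_residue ..
  then show ?thesis by (simp add: block_start_succ)
qed

lemma block_start_shift_mult: "block_start n r lam (m + k * int n) = block_start n r lam m + k * int r"
proof -
  have "(m + k * int n - 1) div int n = (m - 1) div int n + k"
       "(m + k * int n - 1) mod int n = (m - 1) mod int n"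
    using n1 by (simp_all add: diff_add_eq[symmetric])
  then show ?thesis unfolding block_start_def lam_off_def by (simp add: algebra_simps)
qed

lemma mono_block_start: "mono (block_start n r lam)"
proof
  fix m m' :: int assume "m \<le> m'"
  then show "block_start n r lam m \<le> block_start n r lam m'"
    by (induction m' rule: int_ge_induct) (auto simp: block_start_succ)
qed

lemma exists_block: "\<exists>m. block_start n r lam m < x \<and> x \<le> block_start n r lam (m + 1)"
proof (rule exists_crossing_step)
  define k where "k = \<bar>x\<bar> + 1"
  have k: "- k < x" "x < k" "0 \<le> k" unfolding k_def by auto
  have start: "block_start n r lam (1 + j * int n) = j * int r" for j
    using block_start_shift_mult[of 1 j] by (simp add: block_start_def lam_off_def)
  have "k * 1 \<le> k * int r" using r1 k by (intro mult_left_mono) auto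
  then show "block_start n r lam (1 + (- k) * int n) < x" "x \<le> block_start n r lam (1 + k * int n)"
    using start[of k] start[of "-k"] k by linarith+
  show "1 + (- k) * int n \<le> 1 + k * int n" using k by simp
qed

lemma i_lam_eqI:
  assumes "block_start n r lam m < x" "x \<le> block_start n r lam (m + 1)"
  shows "i_lam n r lam x = m"
  unfolding i_lam_def
proof (rule the_equality)
  show "x \<in> Rblock n r lam m" using assms unfolding Rblock_eq_block_start by simp
next
  fix m' assume "x \<in> Rblock n r lam m'"
  then have "block_start n r lam m' < x" "x \<le> block_start n r lam (m' + 1)"
    unfolding Rblock_eq_block_start by auto
  moreover have "block_start n r lam (m' + 1) \<le> block_start n r lam m" if "m' + 1 \<le> m"
    using mono_block_start that by (rule monoD)
  moreover have "block_start n r lam (m + 1) \<le> block_start n r lam m'" if "m + 1 \<le> m'"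
    using mono_block_start that by (rule monoD)
  ultimately show "m' = m" using assms by fastforce
qed

lemma i_lam_bounds:
  "block_start n r lam (i_lam n r lam x) < x \<and> x \<le> block_start n r lam (i_lam n r lam x + 1)"
  using exists_block[of x] i_lam_eqI by blast

lemma mem_Rblock_iff: "x \<in> Rblock n r lam m \<longleftrightarrow> i_lam n r lam x = m"
proof
  assume "x \<in> Rblock n r lam m"
  then show "i_lam n r lam x = m" unfolding Rblock_eq_block_start by (intro i_lam_eqI) auto
next
  assume "i_lam n r lam x = m"
  then show "x \<in> Rblock n r lam m" using i_lam_bounds[of x] unfolding Rblock_eq_block_start by auto
qed

lemma mono_i_lam: "mono (i_lam n r lam)"
proof
  fix x y :: int assume "x \<le> y"
  show "i_lam n r lam x \<le> i_lam n r lam y"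
  proof (rule ccontr)
    assume "\<not> ?thesis"
    then have "block_start n r lam (i_lam n r lam y + 1) \<le> block_start n r lam (i_lam n r lam x)"
      using mono_block_start by (auto intro: monoD)
    then show False using i_lam_bounds[of x] i_lam_bounds[of y] \<open>x \<le> y\<close> by simp
  qed
qed

lemma i_lam_shift_mult: "i_lam n r lam (x + k * int r) = i_lam n r lam x + k * int n"
  using i_lam_bounds[of x] block_start_shift_mult[of "i_lam n r lam x" k]
    block_start_shift_mult[of "i_lam n r lam x + 1" k]
  by (intro i_lam_eqI) (simp_all add: algebra_simps)

lemma i_lam_less: "x + int r \<le> y \<Longrightarrow> i_lam n r lam x < i_lam n r lam y"
  using monoD[OF mono_i_lam, of "x + 1 * int r" y] i_lam_shift_mult[of x 1] n1 by simp

lemma two_le_if_i_lam_succ_eq: "i_lam n r lam a = i_lam n r lam (a + 1) \<Longrightarrow> r \<ge> 2"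
  using i_lam_less[of a "a + 1"] r1 by fastforce

lemma i_lam_Young:
  assumes w: "w \<in> Young n r lam" shows "i_lam n r lam (w x) = i_lam n r lam x"
proof -
  have wa: "aff_perm r w" using w unfolding Young_def by simp
  obtain m0 k where m: "i_lam n r lam x = m0 + k * int n" and m0: "1 \<le> m0" "m0 \<le> int n"
    using obtain_residue_plus_mult[OF n1] .
  define x' where "x' = x - k * int r"
  have "i_lam n r lam x' = m0"
    using i_lam_shift_mult[of x "-k"] m unfolding x'_def by simp
  then have "w x' \<in> Rblock n r lam m0" using w m0 mem_Rblock_iff unfolding Young_def by auto
  then have "i_lam n r lam (w x') = m0" using mem_Rblock_iff by simp
  moreover have "w x = w x' + k * int r"
    using aff_perm_shift_mult[OF wa, of x' k] unfolding x'_def by simp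
  ultimately show ?thesis using i_lam_shift_mult m by simp
qed

lemma Young_comp: "v \<in> Young n r lam \<Longrightarrow> w \<in> Young n r lam \<Longrightarrow> v \<circ> w \<in> Young n r lam"
  unfolding Young_def using aff_perm_comp by auto

lemma sref_in_Young:
  assumes eq: "i_lam n r lam a = i_lam n r lam (a + 1)"
  shows "sref r a \<in> Young n r lam"
proof -
  have r2: "r \<ge> 2" using two_le_if_i_lam_succ_eq[OF eq] .
  have "i_lam n r lam (sref r a j) = i_lam n r lam j" for j
  proof -
    consider q where "j = a + q * int r" | q where "j = (a + 1) + q * int r"
      | "\<not> int r dvd (j - a)" "\<not> int r dvd (j - a - 1)"
      by (metis add.commute diff_add_cancel diff_diff_eq dvdE mult.commute)
    then show ?thesis
    proof cases
      case (1 q)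
      then have "sref r a j = (a + 1) + q * int r" using sref_eq_dvd[OF r2] by simp
      then show ?thesis using 1 eq i_lam_shift_mult by simp
    next
      case (2 q)
      then have "\<not> int r dvd (j - a)" "int r dvd (j - a - 1)"
        using not_dvd_consecutive[OF r2, of "q * int r"] by (simp_all add: algebra_simps)
      then have "sref r a j = a + q * int r" using 2 sref_eq_dvd[OF r2] by simp
      then show ?thesis using 2 eq i_lam_shift_mult by simp
    qed (simp add: sref_eq_dvd[OF r2])
  qed
  then show ?thesis
    unfolding Young_def using aff_perm_sref mem_Rblock_iff by auto
qed

section \<open>Inversions of \<open>i\<^sub>\<lambda> d\<close>\<close>

lemma inversions_subset_Inv_i_lam_comp: "inversions r u \<subseteq> Inv r (i_lam n r lam \<circ> u)"
  unfolding inversions_def Inv_def using monoD[OF mono_i_lam] by auto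

text \<open>The inversions of \<open>i\<^sub>\<lambda> u\<close> are those of \<open>u\<close> together with the pairs \<open>s < t\<close> in the
  same block but with \<open>u s < u t\<close>; such a pair exists iff \<open>u\<^sup>-\<^sup>1\<close> has an ascent \<open>a, a + 1\<close>
  inside one block.\<close>
lemma Inv_i_lam_comp_eq_inversions:
  assumes u: "aff_perm r u"
    and block_descent: "\<And>a. i_lam n r lam a = i_lam n r lam (a + 1) \<Longrightarrow> inv u (a + 1) < inv u a"
  shows "Inv r (i_lam n r lam \<circ> u) = inversions r u"
proof
  show "Inv r (i_lam n r lam \<circ> u) \<subseteq> inversions r u"
  proof clarify
    fix p q assume "(p, q) \<in> Inv r (i_lam n r lam \<circ> u)"
    then have pq: "1 \<le> p" "p \<le> int r" "p < q" "i_lam n r lam (u q) \<le> i_lam n r lam (u p)"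
      unfolding Inv_def by auto
    show "(p, q) \<in> inversions r u"
    proof (rule ccontr)
      assume "(p, q) \<notin> inversions r u"
      moreover have "u p \<noteq> u q" using pq(3) injD[OF aff_perm_inj[OF u], of p q] by auto
      ultimately have less: "u p < u q" using pq unfolding inversions_def by auto
      have "inv u (u p) < inv u (u q)" using pq(3) inv_f_f[OF aff_perm_inj[OF u]] by simp
      then obtain a where a: "u p \<le> a" "a < u q" "inv u a < inv u (a + 1)"
        using exists_ascent_between[of "u p" "u q" "inv u"] less by auto
      have "i_lam n r lam (u p) \<le> i_lam n r lam a" "i_lam n r lam a \<le> i_lam n r lam (a + 1)"
           "i_lam n r lam (a + 1) \<le> i_lam n r lam (u q)"
        using a monoD[OF mono_i_lam] by auto
      then have "i_lam n r lam a = i_lam n r lam (a + 1)" using pq(4) by simp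
      then show False using block_descent a(3) by fastforce
    qed
  qed
  show "inversions r u \<subseteq> Inv r (i_lam n r lam \<circ> u)"
    by (rule inversions_subset_Inv_i_lam_comp)
qed

text \<open>Otherwise \<open>s\<^sub>a w d\<close>, which lies in the same coset since \<open>s\<^sub>a \<in> \<SS>\<^sub>\<lambda>\<close>, would be longer.\<close>
lemma coset_maximal_block_descent:
  assumes d: "aff_perm r d" and w: "w \<in> Young n r lam"
    and max: "\<forall>x\<in>(\<lambda>w. w \<circ> d) ` Young n r lam. aff_len r x \<le> aff_len r (w \<circ> d)"
    and eq: "i_lam n r lam a = i_lam n r lam (a + 1)"
  shows "inv (w \<circ> d) (a + 1) < inv (w \<circ> d) a"
proof (rule ccontr)
  define u where "u = w \<circ> d"
  have u: "aff_perm r u" unfolding u_def using w d aff_perm_comp unfolding Young_def by blast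
  have r2: "r \<ge> 2" using two_le_if_i_lam_succ_eq[OF eq] .
  assume "\<not> inv (w \<circ> d) (a + 1) < inv (w \<circ> d) a"
  moreover have "inv u a \<noteq> inv u (a + 1)"
    using aff_perm_inv_apply[OF u] by (metis add_cancel_right_right one_neq_zero)
  ultimately have asc: "inv u a < inv u (a + 1)" unfolding u_def by simp
  have "sref r a \<circ> w \<in> Young n r lam"
    using Young_comp[OF sref_in_Young[OF eq] w] .
  then have "aff_len r (sref r a \<circ> u) \<le> aff_len r u"
    using max unfolding u_def by (metis comp_assoc image_eqI)
  moreover have "card (inversions r (sref r a \<circ> u)) = Suc (card (inversions r u))"
    using card_inversions_sref_ascent[OF r2 u _ _ asc] aff_perm_inv_apply[OF u] by simp
  ultimately show False
    using aff_len_eq_card_inversions[OF r1] u aff_perm_comp[OF aff_perm_sref u] by simp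
qed

end

text \<open>The hypothesis \<open>d \<in> \<D>\<^sup>\<triangle>\<^sub>\<lambda>\<close> is only used to know that \<open>d\<close> is an affine permutation:
  the identity holds for every representative of the coset.\<close>
theorem corollary3p2p4:
  fixes n r :: nat and lam :: "int \<Rightarrow> nat" and d dplus :: "int \<Rightarrow> int"
  assumes "n \<ge> 1" and "r \<ge> 1"
    and "lam \<in> Lam n r"
    and "d \<in> Dmin n r lam"
    and "dplus \<in> (\<lambda>w. w \<circ> d) ` Young n r lam"
    and "\<forall>x\<in>(\<lambda>w. w \<circ> d) ` Young n r lam. aff_len r x \<le> aff_len r dplus"
  shows "finite (Inv r (seq_act (i_lam n r lam) d))
         \<and> card (Inv r (seq_act (i_lam n r lam) d)) = aff_len r dplus"
proof -
  obtain w where w: "w \<in> Young n r lam" and dplus: "dplus = w \<circ> d" using assms(5) by blast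
  have d: "aff_perm r d" using assms(4) unfolding Dmin_def by simp
  have u: "aff_perm r dplus" using w d aff_perm_comp unfolding dplus Young_def by blast
  have "Inv r (seq_act (i_lam n r lam) d) = Inv r (i_lam n r lam \<circ> dplus)"
    unfolding seq_act_def dplus using i_lam_Young[OF assms(1-3) w] by (simp add: comp_def)
  also have "\<dots> = inversions r dplus"
    using Inv_i_lam_comp_eq_inversions[OF assms(1-3) u]
      coset_maximal_block_descent[OF assms(1-3) d w] assms(6) unfolding dplus by blast
  finally show ?thesis
    using finite_inversions[OF assms(2) u] aff_len_eq_card_inversions[OF assms(2) u] by simp
qed

end
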